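(* Let $A\in\mathbb{C}^{n\times n}$ with $\mathrm{Ind}(A)=k$, let $m\in\mathbb{N}=\{1,2,\dots\}$ and $X\in\mathbb{C}^{n\times n}$. The following are equivalent: (a) $X=A^{\#_m}$; (b) $AX=(A^{\mathrm{cEP}})^mA^mP_{A^m}$ and $\mathcal{R}(X)=\mathcal{R}(A^k)$; (c) $AX=(A^{\mathrm{cEP}})^mA^mP_{A^m}$ and $AX^2=X$.
   Context: For $A\in\mathbb{C}^{n\times n}$: $A^\dagger$ Moore–Penrose inverse, $P_A=AA^\dagger$, $\mathcal{R}(\cdot)$ column space. The index $\mathrm{Ind}(A)$ is the smallest nonnegative integer $k$ with $\mathcal{R}(A^k)=\mathcal{R}(A^{k+1})$ ($A^0=I_n$). The core-EP inverse $A^{\mathrm{cEP}}$ is the unique $X$ with $XAX=X$ and $\mathcal{R}(X)=\mathcal{R}(X^* )=\mathcal{R}(A^k)$. For $m\in\mathbb{N}$, the $m$-weak group inverse is $A^{\mathrm{WG}_m}:=(A^{\mathrm{cEP}})^{m+1}A^m$ and the $m$-weak core inverse is $A^{\#_m}:=A^{\mathrm{WG}_m}P_{A^m}$. *)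

theory Defs
  imports "HOL-Analysis.Analysis"
begin

text \<open>Complex n x n matrices are rendered as complex^'n^'n (n = CARD('n)).\<close>

definition ctrans :: "complex^'n^'m \<Rightarrow> complex^'m^'n" where
  "ctrans A = (\<chi> i j. cnj (A $ j $ i))"

definition colsp :: "complex^'n^'m \<Rightarrow> (complex^'m) set" where
  "colsp A = range (\<lambda>x. A *v x)"

primrec mpow :: "complex^'n^'n \<Rightarrow> nat \<Rightarrow> complex^'n^'n" where
  "mpow A 0 = mat 1"
| "mpow A (Suc k) = A ** mpow A k"

definition mp_inv :: "complex^'n^'n \<Rightarrow> complex^'n^'n" where
  "mp_inv A = (THE X. A ** X ** A = A \<and> X ** A ** X = X \<and>
                      ctrans (A ** X) = A ** X \<and> ctrans (X ** A) = X ** A)"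

definition proj :: "complex^'n^'n \<Rightarrow> complex^'n^'n" where
  "proj A = A ** mp_inv A"

definition mindex :: "complex^'n^'n \<Rightarrow> nat" where
  "mindex A = (LEAST k. colsp (mpow A k) = colsp (mpow A (Suc k)))"

definition core_ep :: "complex^'n^'n \<Rightarrow> complex^'n^'n" where
  "core_ep A = (THE X. X ** A ** X = X \<and> colsp X = colsp (mpow A (mindex A)) \<and>
                       colsp (ctrans X) = colsp (mpow A (mindex A)))"

definition m_wg :: "nat \<Rightarrow> complex^'n^'n \<Rightarrow> complex^'n^'n" where
  "m_wg m A = mpow (core_ep A) (m + 1) ** mpow A m"

definition m_wcore :: "nat \<Rightarrow> complex^'n^'n \<Rightarrow> complex^'n^'n" where
  "m_wcore m A = m_wg m A ** proj (mpow A m)"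

end

theory Submission
  imports Defs
begin

text \<open>Let S = R(A^k). Since R(A^(k+1)) = S, the matrix A maps S onto itself and hence,
  S being finite dimensional, bijectively; the core-EP inverse C = A^cEP satisfies CAC = C
  and R(C) = S, so it inverts A on S. Write G = C^m A^m P_(A^m), so that A^(#_m) = CG.
  G fixes S pointwise (P_(A^m) does, as S \<subseteq> R(A^m), and C^m A^m does), and for m \<ge> 1
  also R(G) \<subseteq> S. Hence A A^(#_m) = G, R(A^(#_m)) = S and A (A^(#_m))^2 = A^(#_m).
  Conversely, a matrix X with R(X) \<subseteq> S is determined by AX because A is injective on S,
  and AX = G together with AX^2 = X gives X = GX, so R(X) \<subseteq> R(G) \<subseteq> S.\<close>

lemma ctrans_ctrans [simp]: "ctrans (ctrans A) = A"
  by (simp add: ctrans_def vec_eq_iff)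

lemma ctrans_mult: "ctrans (A ** B) = ctrans B ** ctrans A"
  by (simp add: ctrans_def matrix_matrix_mult_def vec_eq_iff mult.commute)

lemma matrix_diff_ldistrib: "(A::'a::ring_1^'n^'m) ** (B - C) = A ** B - A ** C"
  by (simp add: matrix_matrix_mult_def vec_eq_iff sum_subtractf algebra_simps)

lemma ctrans_mult_self_eq_0:
  assumes "ctrans E ** E = 0" shows "E = 0"
proof -
  have "(\<Sum>i\<in>UNIV. E $ i $ j * cnj (E $ i $ j)) = 0" for j
    using arg_cong[OF assms, of "\<lambda>M. M $ j $ j"]
    by (simp add: ctrans_def matrix_matrix_mult_def mult.commute)
  then have "(\<Sum>i\<in>UNIV. (cmod (E $ i $ j))\<^sup>2) = 0" for j
    by (simp only: complex_norm_square[symmetric] of_real_sum[symmetric] of_real_eq_0_iff)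
  then show ?thesis
    by (simp add: sum_nonneg_eq_0_iff vec_eq_iff)
qed

lemma gram_mult_cancel:
  assumes "ctrans M ** M ** B = ctrans M ** M ** C"
  shows "M ** B = M ** C"
proof -
  have "ctrans (M ** (B - C)) ** (M ** (B - C)) = ctrans (B - C) ** (ctrans M ** M ** (B - C))"
    by (simp add: ctrans_mult matrix_mul_assoc)
  also have "\<dots> = 0"
    using assms by (simp add: matrix_diff_ldistrib)
  finally have "M ** (B - C) = 0"
    by (rule ctrans_mult_self_eq_0)
  then show ?thesis by (simp add: matrix_diff_ldistrib)
qed

lemma ex_inner_inverse: "\<exists>Y. (M::complex^'n^'n) ** Y ** M = M"
proof -
  obtain g where g: "Vector_Spaces.linear (*s) (*s) g"
      "\<forall>v\<in>range ((*v) M). M *v (g v) = v"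
    using vec.linear_exists_right_inverse_on[OF matrix_vector_mul_linear_gen vec.subspace_UNIV]
    by blast
  have "(M ** matrix g ** M) *v x = M *v x" for x
    using g by (simp add: matrix_vector_mul_assoc[symmetric] matrix_works)
  then show ?thesis by (auto simp: matrix_eq)
qed

text \<open>The witness is Z M^* with Z a Hermitian inner inverse of the Gram matrix M^* M.\<close>

lemma ex_inner_inverse_hermitian_right:
  "\<exists>G. (M::complex^'n^'n) ** G ** M = M \<and> ctrans (M ** G) = M ** G"
proof -
  define H where "H = ctrans M ** M"
  have H: "ctrans H = H" by (simp add: H_def ctrans_mult)
  obtain Y where Y: "H ** Y ** H = H" using ex_inner_inverse by blast
  have Y': "H ** ctrans Y ** H = H"
    using arg_cong[OF Y, of ctrans] by (simp add: ctrans_mult H matrix_mul_assoc)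
  define Z where "Z = Y ** H ** ctrans Y"
  have Z: "ctrans Z = Z" by (simp add: Z_def ctrans_mult H matrix_mul_assoc)
  have "H ** Z ** H = H"
    by (simp add: Z_def matrix_mul_assoc Y Y')
  then have "ctrans M ** M ** (Z ** ctrans M ** M) = ctrans M ** M ** mat 1"
    by (simp add: H_def matrix_mul_assoc)
  then have "M ** (Z ** ctrans M ** M) = M ** mat 1"
    by (rule gram_mult_cancel)
  then have "M ** (Z ** ctrans M) ** M = M"
    by (simp add: matrix_mul_assoc)
  moreover have "ctrans (M ** (Z ** ctrans M)) = M ** (Z ** ctrans M)"
    by (simp add: ctrans_mult Z matrix_mul_assoc)
  ultimately show ?thesis by blast
qed

lemma ex_inner_inverse_hermitian_left:
  "\<exists>F. (M::complex^'n^'n) ** F ** M = M \<and> ctrans (F ** M) = F ** M"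
proof -
  obtain G where G: "ctrans M ** G ** ctrans M = ctrans M" "ctrans (ctrans M ** G) = ctrans M ** G"
    using ex_inner_inverse_hermitian_right by blast
  have "M ** ctrans G ** M = M"
    using arg_cong[OF G(1), of ctrans] by (simp add: ctrans_mult matrix_mul_assoc)
  moreover have "ctrans (ctrans G ** M) = ctrans G ** M"
    using G(2) by (simp add: ctrans_mult)
  ultimately show ?thesis by blast
qed

definition penrose :: "complex^'n^'n \<Rightarrow> complex^'n^'n \<Rightarrow> bool" where
  "penrose A X \<longleftrightarrow> A ** X ** A = A \<and> X ** A ** X = X \<and>
                      ctrans (A ** X) = A ** X \<and> ctrans (X ** A) = X ** A"

lemma ex_penrose: "\<exists>X. penrose A X"
proof -
  obtain G where G: "A ** G ** A = A" "ctrans (A ** G) = A ** G"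
    using ex_inner_inverse_hermitian_right by blast
  obtain F where F: "A ** F ** A = A" "ctrans (F ** A) = F ** A"
    using ex_inner_inverse_hermitian_left by blast
  have AX: "A ** (F ** A ** G) = A ** G"
    by (simp add: matrix_mul_assoc F(1))
  have XA: "F ** A ** G ** A = F ** A"
    using G(1) by (simp add: matrix_mul_assoc[symmetric])
  have "F ** A ** (F ** A ** G) = F ** (A ** F ** A) ** G"
    by (simp only: matrix_mul_assoc)
  then have XAX: "F ** A ** (F ** A ** G) = F ** A ** G"
    by (simp only: F(1))
  have "penrose A (F ** A ** G)"
    unfolding penrose_def by (simp only: AX XA XAX F G simp_thms)
  then show ?thesis ..
qed

lemma penrose_unique:
  assumes X: "penrose A X" and Y: "penrose A Y" shows "X = Y"
proof -
  have x1: "A ** X ** A = A" and x2: "X ** A ** X = X" and x3: "ctrans (A ** X) = A ** X"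
    and x4: "ctrans (X ** A) = X ** A" using X by (auto simp: penrose_def)
  have y1: "A ** Y ** A = A" and y2: "Y ** A ** Y = Y" and y3: "ctrans (A ** Y) = A ** Y"
    and y4: "ctrans (Y ** A) = Y ** A" using Y by (auto simp: penrose_def)
  have "X = X ** ctrans (A ** X)" using x2 x3 by (simp add: matrix_mul_assoc)
  also have "\<dots> = X ** ctrans X ** ctrans (A ** Y ** A)"
    by (simp add: ctrans_mult matrix_mul_assoc y1)
  also have "\<dots> = X ** ctrans (A ** X) ** ctrans (A ** Y)"
    by (simp add: ctrans_mult matrix_mul_assoc)
  also have "\<dots> = X ** A ** Y" using x2 x3 y3 by (simp add: matrix_mul_assoc)
  finally have XAY: "X = X ** A ** Y" .
  have "Y = ctrans (Y ** A) ** Y" using y2 y4 by (simp add: matrix_mul_assoc)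
  also have "\<dots> = ctrans (A ** X ** A) ** ctrans Y ** Y"
    by (simp add: ctrans_mult matrix_mul_assoc x1)
  also have "\<dots> = ctrans (X ** A) ** ctrans (Y ** A) ** Y"
    by (simp add: ctrans_mult matrix_mul_assoc)
  also have "\<dots> = X ** A ** (Y ** A ** Y)" using x4 y4 by (simp add: matrix_mul_assoc)
  finally show ?thesis using XAY y2 by simp
qed

lemma penrose_mp_inv: "penrose A (mp_inv A)"
proof -
  have "\<exists>!X. penrose A X"
    using ex_penrose penrose_unique by blast
  then show ?thesis
    unfolding mp_inv_def penrose_def[symmetric] by (rule theI')
qed

lemma mult_mp_inv_mult: "A ** mp_inv A ** A = A"
  and mp_inv_mult_mp_inv: "mp_inv A ** A ** mp_inv A = mp_inv A"
  and ctrans_mult_mp_inv: "ctrans (A ** mp_inv A) = A ** mp_inv A"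
  using penrose_mp_inv[of A] by (auto simp: penrose_def)

lemma colsp_mult_subset: "colsp (A ** B) \<subseteq> colsp A"
  unfolding colsp_def by (auto simp: matrix_vector_mul_assoc[symmetric])

lemma proj_mult_eq:
  assumes "colsp Z \<subseteq> colsp M" shows "proj M ** Z = Z"
proof -
  have "proj M *v (Z *v v) = Z *v v" for v
  proof -
    obtain x where "Z *v v = M *v x"
      using assms unfolding colsp_def by auto
    then show ?thesis
      by (simp add: proj_def matrix_vector_mul_assoc mult_mp_inv_mult)
  qed
  then show ?thesis
    by (simp add: matrix_eq matrix_vector_mul_assoc)
qed

lemma colsp_subsetE:
  fixes M :: "complex^'n^'n" and Z :: "complex^'k^'n"
  assumes "colsp Z \<subseteq> colsp M"
  obtains W where "Z = M ** W"
proof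
  show "Z = M ** (mp_inv M ** Z)"
    using proj_mult_eq[OF assms] by (simp add: proj_def matrix_mul_assoc)
qed

lemma colsp_ctrans_mp_inv: "colsp (ctrans (mp_inv M)) = colsp M"
proof
  have "ctrans (mp_inv M) = ctrans (mp_inv M ** (M ** mp_inv M))"
    by (simp add: mp_inv_mult_mp_inv matrix_mul_assoc)
  also have "\<dots> = M ** (mp_inv M ** ctrans (mp_inv M))"
    by (subst ctrans_mult) (simp add: ctrans_mult_mp_inv matrix_mul_assoc)
  finally show "colsp (ctrans (mp_inv M)) \<subseteq> colsp M"
    by (metis colsp_mult_subset)
  have "M = ctrans (M ** mp_inv M) ** M"
    by (simp add: ctrans_mult_mp_inv mult_mp_inv_mult)
  also have "\<dots> = ctrans (mp_inv M) ** (ctrans M ** M)"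
    by (simp add: ctrans_mult matrix_mul_assoc)
  finally show "colsp M \<subseteq> colsp (ctrans (mp_inv M))"
    by (metis colsp_mult_subset)
qed

lemma mpow_Suc_right: "mpow A (Suc k) = mpow A k ** A"
  by (induction k) (simp_all add: matrix_mul_assoc)

lemma mpow_add: "mpow A (i + j) = mpow A i ** mpow A j"
  by (induction i) (simp_all add: matrix_mul_assoc)

lemma colsp_subspace: "vec.subspace (colsp (M::complex^'n^'n))"
  unfolding colsp_def by (rule vec.subspace_image) simp

lemma colsp_mult: "colsp (A ** M) = (*v) A ` colsp M"
  unfolding colsp_def by (auto simp: matrix_vector_mul_assoc[symmetric] image_iff)

lemma colsp_mpow_antimono: "i \<le> j \<Longrightarrow> colsp (mpow A j) \<subseteq> colsp (mpow A i)"
proof (induction j)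
  case (Suc j)
  have "colsp (mpow A (Suc j)) \<subseteq> colsp (mpow A j)"
    by (simp only: mpow_Suc_right colsp_mult_subset)
  with Suc show ?case by (cases "i = Suc j") auto
qed simp

lemma ex_colsp_mpow_eq_Suc: "\<exists>k. colsp (mpow (A::complex^'n^'n) k) = colsp (mpow A (Suc k))"
proof (rule ccontr)
  assume "\<not> ?thesis"
  then have psubset: "colsp (mpow A (Suc k)) \<subset> colsp (mpow A k)" for k
    using colsp_mpow_antimono[of k "Suc k" A] by auto
  have dim_less: "vec.dim (colsp (mpow A (Suc k))) < vec.dim (colsp (mpow A k))" for k
    using vec.dim_psubset[of "colsp (mpow A (Suc k))" "colsp (mpow A k)"] psubset[of k]
    by (simp add: vec.span_eq_iff[THEN iffD2, OF colsp_subspace])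
  have "vec.dim (colsp (mpow A j)) + j \<le> vec.dim (colsp (mpow A 0))" for j
  proof (induction j)
    case (Suc j) then show ?case using dim_less[of j] by simp
  qed simp
  from this[of "Suc (vec.dim (colsp (mpow A 0)))"] show False by simp
qed

lemma colsp_mpow_mindex_add:
  "colsp (mpow (A::complex^'n^'n) (mindex A + j)) = colsp (mpow A (mindex A))"
proof -
  have "colsp (mpow A (mindex A)) = colsp (mpow A (Suc (mindex A)))"
    unfolding mindex_def by (rule LeastI_ex[OF ex_colsp_mpow_eq_Suc])
  then have stable: "(*v) A ` colsp (mpow A (mindex A)) = colsp (mpow A (mindex A))"
    by (simp add: colsp_mult)
  show ?thesis
  proof (induction j)
    case (Suc j)
    have "colsp (mpow A (mindex A + Suc j)) = (*v) A ` colsp (mpow A (mindex A + j))"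
      by (simp add: colsp_mult)
    also have "\<dots> = colsp (mpow A (mindex A))"
      using Suc stable by simp
    finally show ?case .
  qed simp
qed

lemma colsp_mpow_mindex_subset:
  "colsp (mpow (A::complex^'n^'n) (mindex A)) \<subseteq> colsp (mpow A m)"
proof (cases "m \<le> mindex A")
  case False
  then obtain j where "m = mindex A + j" by (metis le_add_diff_inverse nat_le_linear)
  then show ?thesis using colsp_mpow_mindex_add[of A j] by simp
qed (rule colsp_mpow_antimono)

lemma inj_on_if_image_eq_subspace:
  fixes A :: "complex^'n^'n"
  assumes S: "vec.subspace S" and AS: "(*v) A ` S = S"
  shows "inj_on ((*v) A) S"
proof -
  obtain B where B: "B \<subseteq> S" "vec.independent B" "S \<subseteq> vec.span B" "card B = vec.dim S"
    using vec.basis_exists by blast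
  have fin: "finite B" using B(2) vec.finiteI_independent by blast
  have span_B: "vec.span B = S" using B S by (metis vec.span_minimal subset_antisym)
  have span_AB: "vec.span ((*v) A ` B) = S"
    using AS span_B by (simp add: vec.span_image)
  have AB_sub: "(*v) A ` B \<subseteq> S" using B(1) AS by blast
  have card_AB: "card ((*v) A ` B) \<le> card B" using fin card_image_le by blast
  have indep: "vec.independent ((*v) A ` B)"
    by (rule vec.card_le_dim_spanning[OF AB_sub]) (use span_AB fin card_AB B in auto)
  have "vec.dim S \<le> card ((*v) A ` B)"
    by (rule vec.span_card_ge_dim[OF AB_sub]) (use span_AB fin in auto)
  then have "inj_on ((*v) A) B"
    using card_AB B fin by (simp add: inj_on_iff_eq_card)
  then show ?thesis
    using vec.inj_on_span_iff_independent_image[OF indep] span_B by simp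
qed

lemma image_colsp_mpow_mindex:
  "(*v) A ` colsp (mpow (A::complex^'n^'n) (mindex A)) = colsp (mpow A (mindex A))"
  using colsp_mpow_mindex_add[of A 1] by (simp add: colsp_mult)

lemma colsp_mult_mindex_subset:
  assumes "colsp Z \<subseteq> colsp (mpow A (mindex A))"
  shows "colsp (A ** Z) \<subseteq> colsp (mpow (A::complex^'n^'n) (mindex A))"
  using assms image_colsp_mpow_mindex[of A] by (auto simp: colsp_mult)

lemma mult_left_cancel_on_mindex:
  fixes A :: "complex^'n^'n"
  assumes "colsp X \<subseteq> colsp (mpow A (mindex A))" "colsp Y \<subseteq> colsp (mpow A (mindex A))"
    and "A ** X = A ** Y"
  shows "X = Y"
proof -
  have "X *v v = Y *v v" for v
  proof (rule inj_onD[OF inj_on_if_image_eq_subspace[OF colsp_subspace image_colsp_mpow_mindex]])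
    show "A *v (X *v v) = A *v (Y *v v)"
      using assms(3) by (simp add: matrix_vector_mul_assoc)
    show "X *v v \<in> colsp (mpow A (mindex A))" "Y *v v \<in> colsp (mpow A (mindex A))"
      using assms(1,2) unfolding colsp_def by blast+
  qed
  then show ?thesis by (simp add: matrix_eq)
qed

definition is_core_ep :: "complex^'n^'n \<Rightarrow> complex^'n^'n \<Rightarrow> bool" where
  "is_core_ep A X \<longleftrightarrow> X ** A ** X = X \<and> colsp X = colsp (mpow A (mindex A)) \<and>
                         colsp (ctrans X) = colsp (mpow A (mindex A))"

lemma outer_inverse_mult_cancel:
  fixes A X :: "complex^'n^'n" and Z :: "complex^'k^'n"
  assumes "X ** A ** X = X" "colsp Z \<subseteq> colsp X"
  shows "X ** A ** Z = Z"
proof -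
  obtain W where Z: "Z = X ** W"
    using assms(2) by (rule colsp_subsetE)
  have "X ** A ** Z = X ** A ** X ** W"
    by (simp add: Z matrix_mul_assoc)
  also have "\<dots> = Z"
    using assms(1) Z by simp
  finally show ?thesis .
qed

lemma is_core_ep_unique:
  assumes "is_core_ep A X" "is_core_ep A Y" shows "X = Y"
proof -
  have X: "X ** A ** X = X" and Y: "Y ** A ** Y = Y"
    using assms by (auto simp: is_core_ep_def)
  have X': "ctrans X ** ctrans A ** ctrans X = ctrans X"
    using arg_cong[OF X, of ctrans] by (simp add: ctrans_mult matrix_mul_assoc)
  have "Y ** A ** X = X"
    by (rule outer_inverse_mult_cancel[OF Y]) (use assms in \<open>simp add: is_core_ep_def\<close>)
  moreover have "ctrans X ** ctrans A ** ctrans Y = ctrans Y"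
    by (rule outer_inverse_mult_cancel[OF X']) (use assms in \<open>simp add: is_core_ep_def\<close>)
  then have "ctrans (ctrans X ** ctrans A ** ctrans Y) = Y"
    by simp
  then have "Y ** A ** X = Y"
    by (simp add: ctrans_mult matrix_mul_assoc)
  ultimately show ?thesis by simp
qed

lemma is_core_ep_mpow_mp_inv:
  "is_core_ep A (mpow A (mindex A) ** mp_inv (mpow A (Suc (mindex A))))"
proof -
  define S where "S = colsp (mpow A (mindex A))"
  define M where "M = mpow A (Suc (mindex A))"
  define X where "X = mpow A (mindex A) ** mp_inv M"
  have AM: "A ** mpow A (mindex A) = M"
    by (simp add: M_def)
  have colsp_M: "colsp M = S"
    using colsp_mpow_mindex_add[of A 1] by (simp add: M_def S_def)
  have "X ** A ** X = mpow A (mindex A) ** (mp_inv M ** (A ** mpow A (mindex A)) ** mp_inv M)"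
    by (simp add: X_def matrix_mul_assoc)
  then have XAX: "X ** A ** X = X"
    by (simp add: AM mp_inv_mult_mp_inv X_def)
  have colsp_X: "colsp X \<subseteq> S"
    unfolding X_def S_def by (rule colsp_mult_subset)
  have "X ** (A ** mpow A (mindex A)) = mpow A (mindex A)"
  proof (rule mult_left_cancel_on_mindex)
    show "colsp (X ** (A ** mpow A (mindex A))) \<subseteq> colsp (mpow A (mindex A))"
      using colsp_X colsp_mult_subset S_def by blast
    show "A ** (X ** (A ** mpow A (mindex A))) = A ** mpow A (mindex A)"
      using mult_mp_inv_mult[of M] by (simp add: X_def AM matrix_mul_assoc)
  qed simp
  then have "S \<subseteq> colsp X"
    unfolding S_def by (metis colsp_mult_subset)
  moreover have "colsp (ctrans X) \<subseteq> S"
    using colsp_mult_subset[of "ctrans (mp_inv M)"] colsp_ctrans_mp_inv[of M]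
    by (simp add: X_def ctrans_mult colsp_M)
  moreover have "M = ctrans X ** (ctrans A ** M)"
  proof -
    have "M = ctrans (M ** mp_inv M) ** M"
      by (simp add: ctrans_mult_mp_inv mult_mp_inv_mult)
    also have "\<dots> = ctrans X ** (ctrans A ** M)"
      by (simp add: X_def ctrans_mult AM[symmetric] matrix_mul_assoc)
    finally show ?thesis .
  qed
  then have "S \<subseteq> colsp (ctrans X)"
    using colsp_M colsp_mult_subset by metis
  ultimately have "is_core_ep A X"
    using XAX colsp_X unfolding is_core_ep_def S_def by blast
  then show ?thesis
    by (simp add: X_def M_def)
qed

lemma is_core_ep_core_ep: "is_core_ep A (core_ep A)"
proof -
  have "\<exists>!X. is_core_ep A X"
    using is_core_ep_mpow_mp_inv is_core_ep_unique by blast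
  then show ?thesis
    unfolding core_ep_def is_core_ep_def[symmetric] by (rule theI')
qed

lemma colsp_core_ep: "colsp (core_ep A) = colsp (mpow A (mindex A))"
  using is_core_ep_core_ep[of A] by (simp add: is_core_ep_def)

lemma core_ep_mult_cancel:
  assumes "colsp Z \<subseteq> colsp (mpow A (mindex A))"
  shows "core_ep A ** A ** Z = Z"
proof (rule outer_inverse_mult_cancel)
  show "core_ep A ** A ** core_ep A = core_ep A"
    using is_core_ep_core_ep[of A] by (simp add: is_core_ep_def)
  show "colsp Z \<subseteq> colsp (core_ep A)"
    using assms by (simp add: colsp_core_ep)
qed

lemma mult_core_ep_cancel:
  assumes "colsp Z \<subseteq> colsp (mpow A (mindex A))"
  shows "A ** core_ep A ** Z = Z"
proof -
  have "colsp Z \<subseteq> colsp (A ** mpow A (mindex A))"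
    using assms colsp_mpow_mindex_add[of A 1] by simp
  then obtain W where W: "Z = A ** mpow A (mindex A) ** W"
    by (rule colsp_subsetE)
  have cancel: "core_ep A ** A ** (mpow A (mindex A) ** W) = mpow A (mindex A) ** W"
    by (rule core_ep_mult_cancel) (rule colsp_mult_subset)
  have "A ** core_ep A ** Z = A ** (core_ep A ** A ** (mpow A (mindex A) ** W))"
    by (simp add: W matrix_mul_assoc)
  also have "\<dots> = Z"
    unfolding cancel by (simp add: W matrix_mul_assoc)
  finally show ?thesis .
qed

lemma mpow_core_ep_mpow_cancel:
  assumes "colsp Z \<subseteq> colsp (mpow A (mindex A))"
  shows "mpow (core_ep A) j ** mpow A j ** Z = Z"
  using assms
proof (induction j arbitrary: Z)
  case (Suc j)
  have IH: "mpow (core_ep A) j ** mpow A j ** (A ** Z) = A ** Z"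
    using Suc.IH colsp_mult_mindex_subset[OF Suc.prems] .
  have "mpow (core_ep A) (Suc j) ** mpow A (Suc j) ** Z
      = core_ep A ** (mpow (core_ep A) j ** mpow A j ** (A ** Z))"
    by (simp only: mpow.simps(2)[of "core_ep A"] mpow_Suc_right[of A] matrix_mul_assoc)
  also have "\<dots> = core_ep A ** A ** Z"
    unfolding IH by (simp only: matrix_mul_assoc)
  also have "\<dots> = Z"
    using Suc.prems by (rule core_ep_mult_cancel)
  finally show ?case .
qed simp

lemma colsp_mpow_core_ep_mult_subset:
  assumes "0 < j"
  shows "colsp (mpow (core_ep A) j ** Z) \<subseteq> colsp (mpow A (mindex A))"
proof -
  obtain i where "j = Suc i" using assms gr0_implies_Suc by blast
  then have "mpow (core_ep A) j ** Z = core_ep A ** (mpow (core_ep A) i ** Z)"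
    by (simp add: matrix_mul_assoc)
  then show ?thesis
    using colsp_mult_subset colsp_core_ep by metis
qed

lemma m_wcore_eq:
  "m_wcore m A = core_ep A ** (mpow (core_ep A) m ** mpow A m ** proj (mpow A m))"
  by (simp add: m_wcore_def m_wg_def matrix_mul_assoc)

lemma mpow_core_ep_mpow_proj_cancel:
  assumes "colsp Z \<subseteq> colsp (mpow A (mindex A))"
  shows "mpow (core_ep A) m ** mpow A m ** proj (mpow A m) ** Z = Z"
proof -
  have "proj (mpow A m) ** Z = Z"
    using assms colsp_mpow_mindex_subset by (blast intro: proj_mult_eq)
  then have "mpow (core_ep A) m ** mpow A m ** proj (mpow A m) ** Z
      = mpow (core_ep A) m ** mpow A m ** Z"
    by (simp flip: matrix_mul_assoc)
  then show ?thesis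
    using mpow_core_ep_mpow_cancel[OF assms] by simp
qed

lemma colsp_mpow_core_ep_mpow_proj_subset:
  assumes "0 < m"
  shows "colsp (mpow (core_ep A) m ** mpow A m ** proj (mpow A m))
    \<subseteq> colsp (mpow A (mindex A))"
  using colsp_mpow_core_ep_mult_subset[OF assms, of A "mpow A m ** proj (mpow A m)"]
  by (simp add: matrix_mul_assoc)

lemma mult_m_wcore:
  assumes "0 < m"
  shows "A ** m_wcore m A = mpow (core_ep A) m ** mpow A m ** proj (mpow A m)"
    (is "_ = ?G")
proof -
  have "A ** core_ep A ** ?G = ?G"
    using colsp_mpow_core_ep_mpow_proj_subset[OF assms] by (rule mult_core_ep_cancel)
  then show ?thesis
    by (simp add: m_wcore_eq matrix_mul_assoc)
qed

lemma colsp_m_wcore: "colsp (m_wcore m A) = colsp (mpow A (mindex A))"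
proof
  show "colsp (m_wcore m A) \<subseteq> colsp (mpow A (mindex A))"
    unfolding m_wcore_eq by (metis colsp_mult_subset colsp_core_ep)
  let ?k = "mindex A"
  have "proj (mpow A m) ** mpow A (m + Suc ?k) = mpow A (m + Suc ?k)"
    by (rule proj_mult_eq) (simp only: mpow_add colsp_mult_subset)
  then have "m_wcore m A ** mpow A (m + Suc ?k)
      = mpow (core_ep A) (m + 1) ** (mpow A m ** mpow A (m + Suc ?k))"
    by (simp only: m_wcore_def m_wg_def flip: matrix_mul_assoc)
  also have "mpow A m ** mpow A (m + Suc ?k) = mpow A (m + 1) ** mpow A (?k + m)"
    by (simp only: mpow_add[symmetric]) (simp add: algebra_simps)
  finally have "m_wcore m A ** mpow A (m + Suc ?k)
      = mpow (core_ep A) (m + 1) ** mpow A (m + 1) ** mpow A (?k + m)"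
    by (simp only: matrix_mul_assoc)
  also have "\<dots> = mpow A (?k + m)"
    by (rule mpow_core_ep_mpow_cancel) (simp add: colsp_mpow_mindex_add)
  finally show "colsp (mpow A ?k) \<subseteq> colsp (m_wcore m A)"
    by (metis colsp_mpow_mindex_add colsp_mult_subset)
qed

lemma mult_m_wcore_square: "A ** (m_wcore m A ** m_wcore m A) = m_wcore m A"
proof -
  let ?W = "m_wcore m A"
  let ?G = "mpow (core_ep A) m ** mpow A m ** proj (mpow A m)"
  have "?G ** ?W = ?W"
    by (rule mpow_core_ep_mpow_proj_cancel) (simp add: colsp_m_wcore)
  moreover have "?W ** ?W = core_ep A ** (?G ** ?W)"
    by (subst (1) m_wcore_eq) (simp only: matrix_mul_assoc)
  moreover have "A ** core_ep A ** ?W = ?W"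
    by (rule mult_core_ep_cancel) (simp add: colsp_m_wcore)
  ultimately show ?thesis
    by (simp add: matrix_mul_assoc)
qed

theorem corollary4p13:
  fixes A X :: "complex^'n^'n" and m k :: nat
  assumes "mindex A = k" and "m \<ge> 1"
  shows "(X = m_wcore m A \<longleftrightarrow>
            (A ** X = mpow (core_ep A) m ** mpow A m ** proj (mpow A m) \<and>
             colsp X = colsp (mpow A k)))
       \<and> (X = m_wcore m A \<longleftrightarrow>
            (A ** X = mpow (core_ep A) m ** mpow A m ** proj (mpow A m) \<and>
             A ** (X ** X) = X))"
proof -
  let ?S = "colsp (mpow A k)"
  let ?G = "mpow (core_ep A) m ** mpow A m ** proj (mpow A m)"
  have m: "0 < m" using assms(2) by simp
  have AW: "A ** m_wcore m A = ?G"
    using mult_m_wcore[OF m] .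
  have colsp_W: "colsp (m_wcore m A) = ?S"
    using colsp_m_wcore[of m A] unfolding assms(1) .
  have colsp_G: "colsp ?G \<subseteq> ?S"
    using colsp_mpow_core_ep_mpow_proj_subset[OF m, of A] unfolding assms(1) .
  have eq_W: "X = m_wcore m A" if "A ** X = ?G" "colsp X \<subseteq> ?S"
    using mult_left_cancel_on_mindex[of X A "m_wcore m A"] that AW colsp_W assms(1) by simp
  have "colsp X \<subseteq> ?S" if "A ** X = ?G" "A ** (X ** X) = X"
  proof -
    have "X = ?G ** X"
      using that by (simp flip: that(1) add: matrix_mul_assoc)
    then show ?thesis
      using colsp_mult_subset colsp_G by (metis subset_trans)
  qed
  then show ?thesis
    using eq_W AW colsp_W mult_m_wcore_square by auto
qed

end
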